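(* Let $G=(V,E)$ be a temporal graph, $s\in V$, $t_s\in\mathbb{R}$, and $T$ the DFS tree produced by DFS-v2 on $G$ from $s$ with starting time $t_s$. Let $t_x\le t_y$ with $t_x\ge t_s$, let $v\neq s$, and let $O(v)$ be the set of occurrences of $v$ in $T$. Let $O'(v)=\{v_o\in O(v): t_{start}(v_o)\ge t_x,\ t_{end}(v_o)\le t_y\}$. If $O'(v)\neq\emptyset$ and $v_{\min}\in O'(v)$ minimizes $t_{end}(v_o)-t_{start}(v_o)$ over $O'(v)$, then the tree path from the root to $v_{\min}$ is a fastest path from $s$ to $v$ within $[t_x,t_y]$: it is a temporal path $P$ from $s$ to $v$ with $t_x\le t_{start}(P)$, $t_{end}(P)\le t_y$, and $t_{end}(P)-t_{start}(P)\le t_{end}(P')-t_{start}(P')$ for every temporal path $P'$ from $s$ to $v$ with $t_x\le t_{start}(P')$ and $t_{end}(P')\le t_y$. If $O'(v)=\emptyset$, then no temporal path $P'$ from $s$ to $v$ with $t_x\le t_{start}(P')$ and $t_{end}(P')\le t_y$ exists.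
   Context: A temporal graph is a pair $G=(V,E)$ where $V$ is a finite set of vertices and $E$ is a finite set of temporal edges, i.e. triples $(u,v,t)$ with $u,v\in V$, $u\neq v$, $t\in\mathbb{R}$ (the time at which the edge is active); distinct elements of $E$ are distinct triples. A temporal path from $x$ to $y$ is a sequence $P=\langle (w_1,w_2,t_1),\dots,(w_k,w_{k+1},t_k)\rangle$ of $k\ge1$ edges of $E$ with $w_1=x$, $w_{k+1}=y$ and $t_1\le t_2\le\dots\le t_k$; $t_{start}(P)=t_1$, $t_{end}(P)=t_k$. Temporal DFS-v2. The procedure maintains a value $\sigma(x)\in\mathbb{R}\cup\{\infty\}$ for every $x\in V$, initially $\infty$, and a set of already traversed edges, initially empty, and builds a rooted tree $T$ whose nodes are occurrences of vertices of $G$ (a vertex may occur several times). Each occurrence carries a label, namely the value assigned to $\sigma(x)$ when that occurrence was created. Start: create the root occurrence of $s$, set $\sigma(s)=t_s$, and make it current. Step (a): let $u$ be the vertex of the current occurrence, $\sigma_u$ its label, and $A$ the set of edges $(u,v,t)\in E$ not yet traversed with $\sigma_u\le t$. If $A=\emptyset$: if the current occurrence is the root, terminate; otherwise make its parent current and repeat step (a). If $A\neq\emptyset$, select an edge $e=(u,v,t)\in A$ with the largest time $t$ (ties arbitrary), mark it traversed and go to step (b). Step (b): if the current value $\sigma(v)>t$, create a new occurrence of $v$ as a child of the current occurrence joined by the tree edge $e$, set $\sigma(v):=t$ (its label), make it current and go to (a); otherwise go to (a) with the same current occurrence. Active interval: for a non-root occurrence $v_o$ of $T$, the tree edges on the path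 from the root to $v_o$ form a sequence $\langle (s=w_1,w_2,t_1),\dots,(w_k,w_{k+1}=v,t_k)\rangle$; set $t_{start}(v_o)=t_1$ and $t_{end}(v_o)=t_k$. *)

theory Defs
  imports Complex_Main "HOL-Library.Extended_Real"
begin

type_synonym 'v tedge = "'v \<times> 'v \<times> real"

definition src :: "'v tedge \<Rightarrow> 'v" where "src e = fst e"
definition dst :: "'v tedge \<Rightarrow> 'v" where "dst e = fst (snd e)"
definition tm  :: "'v tedge \<Rightarrow> real" where "tm e = snd (snd e)"

definition temporal_graph :: "'v set \<Rightarrow> 'v tedge set \<Rightarrow> bool" where
  "temporal_graph V E \<longleftrightarrow> finite V \<and> finite E \<and>
     (\<forall>e\<in>E. src e \<in> V \<and> dst e \<in> V \<and> src e \<noteq> dst e)"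

definition temporal_path :: "'v tedge set \<Rightarrow> 'v \<Rightarrow> 'v \<Rightarrow> 'v tedge list \<Rightarrow> bool" where
  "temporal_path E x y P \<longleftrightarrow> P \<noteq> [] \<and> set P \<subseteq> E \<and>
     src (hd P) = x \<and> dst (last P) = y \<and>
     (\<forall>i. Suc i < length P \<longrightarrow> dst (P ! i) = src (P ! Suc i) \<and> tm (P ! i) \<le> tm (P ! Suc i))"

definition t_start :: "'v tedge list \<Rightarrow> real" where "t_start P = tm (hd P)"
definition t_end :: "'v tedge list \<Rightarrow> real" where "t_end P = tm (last P)"

text \<open>An occurrence of the tree T is identified with the list of tree edges on
  the path from the root to it (the root is []).  Its parent is obtained by butlast.
  A state is (sigma, traversed edges, tree, current occurrence).\<close>

type_synonym 'v dfs_state = "('v \<Rightarrow> ereal) \<times> 'v tedge set \<times> 'v tedge list set \<times> 'v tedge list"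

definition occ_vertex :: "'v \<Rightarrow> 'v tedge list \<Rightarrow> 'v" where
  "occ_vertex s c = (if c = [] then s else dst (last c))"

definition occ_label :: "real \<Rightarrow> 'v tedge list \<Rightarrow> real" where
  "occ_label ts c = (if c = [] then ts else tm (last c))"

definition avail :: "'v tedge set \<Rightarrow> 'v \<Rightarrow> real \<Rightarrow> 'v tedge set \<Rightarrow> 'v tedge list \<Rightarrow> 'v tedge set" where
  "avail E s ts tr c = {e \<in> E. e \<notin> tr \<and> src e = occ_vertex s c \<and> occ_label ts c \<le> tm e}"

inductive dfs_step :: "'v tedge set \<Rightarrow> 'v \<Rightarrow> real \<Rightarrow> 'v dfs_state \<Rightarrow> 'v dfs_state \<Rightarrow> bool"
  for E s ts where
  backtrack: "avail E s ts tr c = {} \<Longrightarrow> c \<noteq> [] \<Longrightarrow>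
     dfs_step E s ts (\<sigma>, tr, T, c) (\<sigma>, tr, T, butlast c)"
| advance_new: "e \<in> avail E s ts tr c \<Longrightarrow> (\<forall>e'\<in>avail E s ts tr c. tm e' \<le> tm e) \<Longrightarrow>
     \<sigma> (dst e) > ereal (tm e) \<Longrightarrow>
     dfs_step E s ts (\<sigma>, tr, T, c)
       (\<sigma>(dst e := ereal (tm e)), insert e tr, insert (c @ [e]) T, c @ [e])"
| advance_old: "e \<in> avail E s ts tr c \<Longrightarrow> (\<forall>e'\<in>avail E s ts tr c. tm e' \<le> tm e) \<Longrightarrow>
     \<not> (\<sigma> (dst e) > ereal (tm e)) \<Longrightarrow>
     dfs_step E s ts (\<sigma>, tr, T, c) (\<sigma>, insert e tr, T, c)"

definition dfs_init :: "'v \<Rightarrow> real \<Rightarrow> 'v dfs_state" where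
  "dfs_init s ts = ((\<lambda>x. if x = s then ereal ts else \<infinity>), {}, {[]}, [])"

text \<open>T is a tree produced by a terminated run of DFS-v2 (for some resolution of ties).\<close>
definition dfs_tree :: "'v tedge set \<Rightarrow> 'v \<Rightarrow> real \<Rightarrow> 'v tedge list set \<Rightarrow> bool" where
  "dfs_tree E s ts T \<longleftrightarrow> (\<exists>\<sigma> tr. (dfs_step E s ts)\<^sup>*\<^sup>* (dfs_init s ts) (\<sigma>, tr, T, [])
                                  \<and> avail E s ts tr [] = {})"

text \<open>Occurrences of v in T (non-root, since the root is an occurrence of s).\<close>
definition occurrences :: "'v tedge list set \<Rightarrow> 'v \<Rightarrow> 'v tedge list set" where
  "occurrences T v = {c \<in> T. c \<noteq> [] \<and> dst (last c) = v}"

end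

theory Submission
  imports Defs "HOL-Library.Sublist"
begin

text \<open>
  Call an occurrence d of the DFS tree closed if every edge e leaving its vertex no earlier than
  t_end d leads back to s or to a vertex having an occurrence inside [t_start d, tm e].
  When DFS-v2 terminates, all occurrences are closed, and so are the edges leaving s.
  Indeed, an occurrence is left only once all its usable edges are traversed; a traversed edge e
  satisfies \<sigma>(dst e) \<le> tm e, where \<sigma>(dst e) is the end time of an occurrence of dst e; and since
  the edges of the root are taken latest first, every occurrence starts no earlier than the one
  currently explored. Following an arbitrary temporal path from s edge by edge, closedness
  produces a tree occurrence of its endpoint that lies within the path's time interval, so the
  tree contains a path that is at least as fast and respects the same window.
\<close>

lemma temporal_path_single: "e \<in> E \<Longrightarrow> temporal_path E (src e) (dst e) [e]"
  unfolding temporal_path_def by auto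

lemma temporal_path_snoc:
  assumes "P \<noteq> []"
  shows "temporal_path E x y (P @ [e]) \<longleftrightarrow>
    temporal_path E x (src e) P \<and> e \<in> E \<and> dst e = y \<and> tm (last P) \<le> tm e"
proof -
  have last_nth: "P ! (length P - 1) = last P" using assms by (simp add: last_conv_nth)
  have "(\<forall>i. Suc i < length (P @ [e]) \<longrightarrow>
          dst ((P @ [e]) ! i) = src ((P @ [e]) ! Suc i) \<and> tm ((P @ [e]) ! i) \<le> tm ((P @ [e]) ! Suc i))
    \<longleftrightarrow> (\<forall>i. Suc i < length P \<longrightarrow> dst (P ! i) = src (P ! Suc i) \<and> tm (P ! i) \<le> tm (P ! Suc i))
        \<and> dst (last P) = src e \<and> tm (last P) \<le> tm e"
    (is "?L \<longleftrightarrow> ?R")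
  proof
    assume L: ?L
    have "dst (P ! i) = src (P ! Suc i) \<and> tm (P ! i) \<le> tm (P ! Suc i)" if "Suc i < length P" for i
      using L[rule_format, of i] that by (simp add: nth_append)
    moreover have "dst (last P) = src e \<and> tm (last P) \<le> tm e"
      using L[rule_format, of "length P - 1"] assms last_nth by (simp add: nth_append)
    ultimately show ?R by blast
  next
    assume ?R
    show ?L
    proof (intro allI impI)
      fix i assume "Suc i < length (P @ [e])"
      then consider "Suc i < length P" | "i = length P - 1" by fastforce
      then show "dst ((P @ [e]) ! i) = src ((P @ [e]) ! Suc i) \<and> tm ((P @ [e]) ! i) \<le> tm ((P @ [e]) ! Suc i)"
        by cases (use \<open>?R\<close> assms last_nth in \<open>auto simp: nth_append\<close>)
    qed
  qed
  then show ?thesis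
    using assms unfolding temporal_path_def by auto
qed

lemma temporal_path_t_start_le_t_end:
  "temporal_path E x y P \<Longrightarrow> t_start P \<le> t_end P"
proof (induction P arbitrary: y rule: rev_induct)
  case Nil
  then show ?case by (simp add: temporal_path_def)
next
  case (snoc e P)
  show ?case
  proof (cases "P = []")
    case True
    then show ?thesis by (simp add: t_start_def t_end_def)
  next
    case False
    with snoc have "t_start P \<le> t_end P" "tm (last P) \<le> tm e"
      by (auto simp: temporal_path_snoc)
    with False show ?thesis by (simp add: t_start_def t_end_def)
  qed
qed

definition occurs_within :: "'v tedge list set \<Rightarrow> 'v \<Rightarrow> real \<Rightarrow> real \<Rightarrow> bool" where
  "occurs_within T w a b \<longleftrightarrow> (\<exists>d\<in>occurrences T w. a \<le> t_start d \<and> t_end d \<le> b)"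

lemma occurs_within_mono:
  "occurs_within T w a b \<Longrightarrow> T \<subseteq> T' \<Longrightarrow> a' \<le> a \<Longrightarrow> b \<le> b' \<Longrightarrow> occurs_within T' w a' b'"
  unfolding occurs_within_def occurrences_def by force

definition occ_closed :: "'v tedge set \<Rightarrow> 'v \<Rightarrow> 'v tedge list set \<Rightarrow> 'v tedge list \<Rightarrow> bool" where
  "occ_closed E s T d \<longleftrightarrow> (\<forall>e\<in>E. src e = dst (last d) \<longrightarrow> t_end d \<le> tm e \<longrightarrow>
      dst e = s \<or> occurs_within T (dst e) (t_start d) (tm e))"

lemma occ_closed_mono: "occ_closed E s T d \<Longrightarrow> T \<subseteq> T' \<Longrightarrow> occ_closed E s T' d"
  unfolding occ_closed_def by (meson occurs_within_mono order_refl)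

lemma closed_tree_dominates_path:
  assumes root: "\<And>e. e \<in> E \<Longrightarrow> src e = s \<Longrightarrow> ts \<le> tm e \<Longrightarrow>
      dst e = s \<or> occurs_within T (dst e) (tm e) (tm e)"
    and occ: "\<And>d. d \<in> T \<Longrightarrow> d \<noteq> [] \<Longrightarrow> occ_closed E s T d"
    and "temporal_path E s w P" and "ts \<le> t_start P"
  shows "w = s \<or> occurs_within T w (t_start P) (t_end P)"
  using assms(3,4)
proof (induction P arbitrary: w rule: rev_induct)
  case Nil
  then show ?case by (simp add: temporal_path_def)
next
  case (snoc e P)
  show ?case
  proof (cases "P = []")
    case True
    with snoc.prems have "e \<in> E" "src e = s" "dst e = w" "ts \<le> tm e"
      by (auto simp: temporal_path_def t_start_def)
    with True show ?thesis
      using root[of e] by (simp add: t_start_def t_end_def)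
  next
    case False
    with snoc.prems have P: "temporal_path E s (src e) P" and "e \<in> E" "dst e = w"
      and "t_end P \<le> tm e" and start: "t_start (P @ [e]) = t_start P"
      by (auto simp: temporal_path_snoc t_start_def t_end_def)
    have "t_start P \<le> tm e"
      using temporal_path_t_start_le_t_end[OF P] \<open>t_end P \<le> tm e\<close> by linarith
    from snoc.IH[OF P] snoc.prems(2) start
    consider "src e = s" | d where "d \<in> occurrences T (src e)" "t_start P \<le> t_start d" "t_end d \<le> t_end P"
      unfolding occurs_within_def by auto
    then have "dst e = s \<or> occurs_within T (dst e) (t_start P) (tm e)"
    proof cases
      case 1
      then show ?thesis
        using root[OF \<open>e \<in> E\<close>] snoc.prems(2) start \<open>t_start P \<le> tm e\<close>
        by (metis occurs_within_mono order.trans order_refl)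
    next
      case 2
      with occ have "dst e = s \<or> occurs_within T (dst e) (t_start d) (tm e)"
        using \<open>e \<in> E\<close> \<open>t_end P \<le> tm e\<close> unfolding occurrences_def occ_closed_def by force
      with 2 show ?thesis by (meson occurs_within_mono order_refl)
    qed
    with \<open>dst e = w\<close> start show ?thesis by (simp add: t_end_def)
  qed
qed

definition tree_wf :: "'v tedge set \<Rightarrow> 'v \<Rightarrow> real \<Rightarrow> 'v tedge list set \<Rightarrow> bool" where
  "tree_wf E s ts T \<longleftrightarrow> [] \<in> T \<and> (\<forall>d\<in>T. d \<noteq> [] \<longrightarrow>
     butlast d \<in> T \<and> temporal_path E s (dst (last d)) d \<and> ts \<le> t_end d \<and> dst (last d) \<noteq> s)"

lemma tree_wf_avail:
  assumes "tree_wf E s ts T" "c \<in> T" "e \<in> avail E s ts tr c"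
  shows "ts \<le> tm e" and "src e = s \<Longrightarrow> c = []"
proof -
  have "ts \<le> occ_label ts c"
    using assms(1,2) by (auto simp: tree_wf_def occ_label_def t_end_def)
  then show "ts \<le> tm e"
    using assms(3) by (auto simp: avail_def)
  show "c = []" if "src e = s"
    using assms that by (cases "c = []") (auto simp: tree_wf_def avail_def occ_vertex_def)
qed

lemma tree_wf_insert_snoc:
  assumes wf: "tree_wf E s ts T" and "c \<in> T" and e: "e \<in> avail E s ts tr c" and "dst e \<noteq> s"
  shows "tree_wf E s ts (insert (c @ [e]) T)"
proof -
  have "e \<in> E" and src: "src e = occ_vertex s c" and label: "occ_label ts c \<le> tm e"
    using e unfolding avail_def by blast+
  have "temporal_path E s (dst e) (c @ [e])"
  proof (cases "c = []")
    case True
    with src show ?thesis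
      using temporal_path_single[OF \<open>e \<in> E\<close>] by (simp add: occ_vertex_def)
  next
    case False
    with wf \<open>c \<in> T\<close> have "temporal_path E s (dst (last c)) c"
      by (auto simp: tree_wf_def)
    with False src label \<open>e \<in> E\<close> show ?thesis
      by (simp add: temporal_path_snoc occ_vertex_def occ_label_def)
  qed
  moreover have "ts \<le> tm e"
    using tree_wf_avail(1)[OF wf \<open>c \<in> T\<close> e] .
  ultimately show ?thesis
    using wf \<open>c \<in> T\<close> \<open>dst e \<noteq> s\<close> by (auto simp: tree_wf_def t_end_def)
qed

definition sigma_sound :: "'v \<Rightarrow> real \<Rightarrow> ('v \<Rightarrow> ereal) \<Rightarrow> 'v tedge set \<Rightarrow> 'v tedge list set \<Rightarrow> bool" where
  "sigma_sound s ts \<sigma> tr T \<longleftrightarrow> \<sigma> s = ereal ts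
     \<and> (\<forall>x. x \<noteq> s \<longrightarrow> \<sigma> x \<noteq> \<infinity> \<longrightarrow> (\<exists>d\<in>occurrences T x. \<sigma> x = ereal (t_end d)))
     \<and> (\<forall>e\<in>tr. \<sigma> (dst e) \<le> ereal (tm e))"

lemma sigma_sound_traversed:
  assumes "sigma_sound s ts \<sigma> tr T" "e \<in> tr" "dst e \<noteq> s"
  shows "\<exists>d\<in>occurrences T (dst e). t_end d \<le> tm e"
proof -
  from assms have le: "\<sigma> (dst e) \<le> ereal (tm e)"
    by (simp add: sigma_sound_def)
  then have "\<sigma> (dst e) \<noteq> \<infinity>" by auto
  with assms obtain d where "d \<in> occurrences T (dst e)" "\<sigma> (dst e) = ereal (t_end d)"
    by (auto simp: sigma_sound_def)
  with le show ?thesis by auto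
qed

lemma sigma_sound_insert:
  "sigma_sound s ts \<sigma> tr T \<Longrightarrow> \<sigma> (dst e) \<le> ereal (tm e) \<Longrightarrow> sigma_sound s ts \<sigma> (insert e tr) T"
  by (simp add: sigma_sound_def)

lemma sigma_sound_advance:
  assumes sound: "sigma_sound s ts \<sigma> tr T" and lt: "ereal (tm e) < \<sigma> (dst e)" and "dst e \<noteq> s"
  shows "sigma_sound s ts (\<sigma>(dst e := ereal (tm e))) (insert e tr) (insert (c @ [e]) T)"
  unfolding sigma_sound_def
proof (intro conjI allI impI ballI)
  show "(\<sigma>(dst e := ereal (tm e))) s = ereal ts"
    using sound \<open>dst e \<noteq> s\<close> by (simp add: sigma_sound_def)
next
  fix x assume "x \<noteq> s" "(\<sigma>(dst e := ereal (tm e))) x \<noteq> \<infinity>"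
  then show "\<exists>d\<in>occurrences (insert (c @ [e]) T) x. (\<sigma>(dst e := ereal (tm e))) x = ereal (t_end d)"
    using sound unfolding sigma_sound_def occurrences_def
    by (cases "x = dst e") (auto simp: t_end_def)
next
  fix e' assume "e' \<in> insert e tr"
  moreover have "ereal (tm e) \<le> ereal (tm e')" if "e' \<in> tr" "dst e' = dst e"
    using sound lt that unfolding sigma_sound_def by (metis less_imp_le order_trans)
  ultimately show "(\<sigma>(dst e := ereal (tm e))) (dst e') \<le> ereal (tm e')"
    using sound unfolding sigma_sound_def by auto
qed

text \<open>The root's edges are taken latest first, so the subtree under exploration has the
  earliest start time in the tree.\<close>

definition start_ordered :: "'v tedge set \<Rightarrow> 'v \<Rightarrow> real \<Rightarrow> 'v tedge set \<Rightarrow> 'v tedge list set \<Rightarrow> 'v tedge list \<Rightarrow> bool" where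
  "start_ordered E s ts tr T c \<longleftrightarrow> (\<forall>d\<in>T. d \<noteq> [] \<longrightarrow>
     (\<forall>e\<in>avail E s ts tr []. tm e \<le> t_start d) \<and> (c \<noteq> [] \<longrightarrow> t_start c \<le> t_start d))"

definition root_closed :: "'v \<Rightarrow> 'v tedge set \<Rightarrow> 'v tedge list set \<Rightarrow> bool" where
  "root_closed s tr T \<longleftrightarrow> (\<forall>e\<in>tr. src e = s \<longrightarrow> dst e = s \<or> occurs_within T (dst e) (tm e) (tm e))"

fun dfs_inv :: "'v tedge set \<Rightarrow> 'v \<Rightarrow> real \<Rightarrow> 'v dfs_state \<Rightarrow> bool" where
  "dfs_inv E s ts (\<sigma>, tr, T, c) \<longleftrightarrow> tree_wf E s ts T \<and> c \<in> T \<and> sigma_sound s ts \<sigma> tr T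
     \<and> start_ordered E s ts tr T c \<and> root_closed s tr T
     \<and> (\<forall>d\<in>T. d \<noteq> [] \<longrightarrow> \<not> prefix d c \<longrightarrow> occ_closed E s T d)"

lemma dfs_inv_init: "dfs_inv E s ts (dfs_init s ts)"
  by (simp add: dfs_init_def tree_wf_def sigma_sound_def start_ordered_def root_closed_def)

lemma occ_closed_if_exhausted:
  assumes "sigma_sound s ts \<sigma> tr T" "start_ordered E s ts tr T c" "c \<in> T" "c \<noteq> []"
    and "avail E s ts tr c = {}"
  shows "occ_closed E s T c"
  unfolding occ_closed_def
proof (intro ballI impI)
  fix e assume "e \<in> E" "src e = dst (last c)" "t_end c \<le> tm e"
  moreover have "e \<notin> avail E s ts tr c"
    using assms(5) by blast
  ultimately have "e \<in> tr"
    using assms(4) by (simp add: avail_def occ_vertex_def occ_label_def t_end_def)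
  show "dst e = s \<or> occurs_within T (dst e) (t_start c) (tm e)"
  proof (cases "dst e = s")
    case False
    with sigma_sound_traversed[OF assms(1) \<open>e \<in> tr\<close>]
    obtain d where "d \<in> occurrences T (dst e)" "t_end d \<le> tm e" by blast
    moreover from this assms(2,3,4) have "t_start c \<le> t_start d"
      by (auto simp: start_ordered_def occurrences_def)
    ultimately show ?thesis
      by (auto simp: occurs_within_def)
  qed simp
qed

lemma dfs_inv_backtrack:
  assumes inv: "dfs_inv E s ts (\<sigma>, tr, T, c)" and "avail E s ts tr c = {}" and "c \<noteq> []"
  shows "dfs_inv E s ts (\<sigma>, tr, T, butlast c)"
proof -
  from inv have wf: "tree_wf E s ts T" and "c \<in> T" and order: "start_ordered E s ts tr T c"
    by simp_all
  have "butlast c \<in> T"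
    using wf \<open>c \<in> T\<close> \<open>c \<noteq> []\<close> by (simp add: tree_wf_def)
  moreover have "start_ordered E s ts tr T (butlast c)"
    using order \<open>c \<noteq> []\<close> by (cases c) (auto simp: start_ordered_def t_start_def)
  moreover have "occ_closed E s T c"
    using occ_closed_if_exhausted assms \<open>c \<in> T\<close> by auto
  moreover have "prefix d c \<Longrightarrow> \<not> prefix d (butlast c) \<Longrightarrow> d = c" for d
    using prefix_snoc[of d "butlast c" "last c"] \<open>c \<noteq> []\<close> by simp
  ultimately show ?thesis
    using inv by auto
qed

lemma dfs_inv_advance_old:
  assumes inv: "dfs_inv E s ts (\<sigma>, tr, T, c)" and e: "e \<in> avail E s ts tr c"
    and le: "\<sigma> (dst e) \<le> ereal (tm e)"
  shows "dfs_inv E s ts (\<sigma>, insert e tr, T, c)"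
proof -
  from inv have wf: "tree_wf E s ts T" and "c \<in> T" and sound: "sigma_sound s ts \<sigma> tr T"
    and order: "start_ordered E s ts tr T c" and root: "root_closed s tr T"
    by simp_all
  have sound': "sigma_sound s ts \<sigma> (insert e tr) T"
    using sigma_sound_insert[OF sound le] .
  have "avail E s ts (insert e tr) [] \<subseteq> avail E s ts tr []"
    by (auto simp: avail_def)
  with order have "start_ordered E s ts (insert e tr) T c"
    by (auto simp: start_ordered_def)
  moreover have "occurs_within T (dst e) (tm e) (tm e)" if "src e = s" "dst e \<noteq> s"
  proof -
    from sigma_sound_traversed[OF sound' insertI1 \<open>dst e \<noteq> s\<close>]
    obtain d where "d \<in> occurrences T (dst e)" "t_end d \<le> tm e" by blast
    moreover have "c = []"
      using tree_wf_avail(2)[OF wf \<open>c \<in> T\<close> e \<open>src e = s\<close>] .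
    with e \<open>d \<in> occurrences T (dst e)\<close> order have "tm e \<le> t_start d"
      by (auto simp: start_ordered_def occurrences_def)
    ultimately show ?thesis
      by (auto simp: occurs_within_def)
  qed
  with root have "root_closed s (insert e tr) T"
    by (auto simp: root_closed_def)
  ultimately show ?thesis
    using inv sound' by simp
qed

lemma start_ordered_advance:
  assumes order: "start_ordered E s ts tr T c" and "c \<in> T" and e: "e \<in> avail E s ts tr c"
    and latest: "\<forall>e'\<in>avail E s ts tr c. tm e' \<le> tm e"
  shows "start_ordered E s ts (insert e tr) (insert (c @ [e]) T) (c @ [e])"
proof -
  have avail_sub: "avail E s ts (insert e tr) [] \<subseteq> avail E s ts tr []"
    by (auto simp: avail_def)
  have start: "t_start (c @ [e]) = (if c = [] then tm e else t_start c)"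
    by (cases c) (auto simp: t_start_def)
  have "t_start (c @ [e]) \<le> t_start d" if "d \<in> T" "d \<noteq> []" for d
    using order e that start by (auto simp: start_ordered_def)
  moreover have "tm e' \<le> t_start (c @ [e])" if "e' \<in> avail E s ts tr []" for e'
  proof (cases "c = []")
    case True
    with latest that start show ?thesis by simp
  next
    case False
    with order \<open>c \<in> T\<close> that start show ?thesis by (simp add: start_ordered_def)
  qed
  ultimately show ?thesis
    using order avail_sub by (auto simp: start_ordered_def)
qed

lemma dfs_inv_advance_new:
  assumes inv: "dfs_inv E s ts (\<sigma>, tr, T, c)" and e: "e \<in> avail E s ts tr c"
    and latest: "\<forall>e'\<in>avail E s ts tr c. tm e' \<le> tm e" and lt: "ereal (tm e) < \<sigma> (dst e)"
  shows "dfs_inv E s ts (\<sigma>(dst e := ereal (tm e)), insert e tr, insert (c @ [e]) T, c @ [e])"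
proof -
  from inv have wf: "tree_wf E s ts T" and "c \<in> T" and sound: "sigma_sound s ts \<sigma> tr T"
    and order: "start_ordered E s ts tr T c" and root: "root_closed s tr T"
    and closed: "\<forall>d\<in>T. d \<noteq> [] \<longrightarrow> \<not> prefix d c \<longrightarrow> occ_closed E s T d"
    by simp_all
  let ?T' = "insert (c @ [e]) T"
  have "dst e \<noteq> s"
  proof
    assume "dst e = s"
    with sound lt have "tm e < ts" by (simp add: sigma_sound_def)
    with tree_wf_avail(1)[OF wf \<open>c \<in> T\<close> e] show False by simp
  qed
  have "root_closed s (insert e tr) ?T'"
  proof -
    have "occurs_within ?T' (dst e) (tm e) (tm e)" if "src e = s"
      using tree_wf_avail(2)[OF wf \<open>c \<in> T\<close> e that]
      by (auto simp: occurs_within_def occurrences_def t_start_def t_end_def)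
    moreover have "T \<subseteq> ?T'" by auto
    ultimately show ?thesis
      using root by (auto simp: root_closed_def intro: occurs_within_mono)
  qed
  moreover have "occ_closed E s ?T' d" if "d \<in> ?T'" "d \<noteq> []" "\<not> prefix d (c @ [e])" for d
    using that closed occ_closed_mono[of E s T d ?T'] prefix_order.trans[of d c "c @ [e]"]
    by auto
  ultimately show ?thesis
    using tree_wf_insert_snoc[OF wf \<open>c \<in> T\<close> e \<open>dst e \<noteq> s\<close>]
      sigma_sound_advance[OF sound lt \<open>dst e \<noteq> s\<close>]
      start_ordered_advance[OF order \<open>c \<in> T\<close> e latest]
    by simp
qed

lemma dfs_inv_step: "dfs_step E s ts st st' \<Longrightarrow> dfs_inv E s ts st \<Longrightarrow> dfs_inv E s ts st'"
proof (induction rule: dfs_step.induct)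
  case (backtrack tr c \<sigma> T)
  then show ?case by (blast intro: dfs_inv_backtrack)
next
  case (advance_new e tr c \<sigma> T)
  then show ?case by (blast intro: dfs_inv_advance_new)
next
  case (advance_old e tr c \<sigma> T)
  moreover from advance_old.hyps(3) have "\<sigma> (dst e) \<le> ereal (tm e)" by simp
  ultimately show ?case by (blast intro: dfs_inv_advance_old)
qed

lemma dfs_inv_reachable:
  "(dfs_step E s ts)\<^sup>*\<^sup>* (dfs_init s ts) st \<Longrightarrow> dfs_inv E s ts st"
  by (induction rule: rtranclp_induct) (auto intro: dfs_inv_init dfs_inv_step)

lemma dfs_tree_closed:
  assumes "dfs_tree E s ts T"
  shows "tree_wf E s ts T"
    and "\<And>e. e \<in> E \<Longrightarrow> src e = s \<Longrightarrow> ts \<le> tm e \<Longrightarrow>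
           dst e = s \<or> occurs_within T (dst e) (tm e) (tm e)"
    and "\<And>d. d \<in> T \<Longrightarrow> d \<noteq> [] \<Longrightarrow> occ_closed E s T d"
proof -
  obtain \<sigma> tr where run: "(dfs_step E s ts)\<^sup>*\<^sup>* (dfs_init s ts) (\<sigma>, tr, T, [])"
    and terminated: "avail E s ts tr [] = {}"
    using assms by (auto simp: dfs_tree_def)
  have inv: "dfs_inv E s ts (\<sigma>, tr, T, [])"
    using dfs_inv_reachable[OF run] .
  then show "tree_wf E s ts T" by simp
  show "d \<in> T \<Longrightarrow> d \<noteq> [] \<Longrightarrow> occ_closed E s T d" for d
    using inv by simp
  fix e assume "e \<in> E" "src e = s" "ts \<le> tm e"
  moreover have "e \<notin> avail E s ts tr []"
    using terminated by blast
  ultimately have "e \<in> tr"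
    by (simp add: avail_def occ_vertex_def occ_label_def)
  with inv \<open>src e = s\<close> show "dst e = s \<or> occurs_within T (dst e) (tm e) (tm e)"
    by (simp add: root_closed_def)
qed

theorem mainTheorem9:
  fixes V :: "'v set" and E :: "'v tedge set" and s v :: 'v
    and ts tx ty :: real and T :: "'v tedge list set"
  assumes "temporal_graph V E" and "s \<in> V" and "v \<in> V" and "v \<noteq> s"
    and "dfs_tree E s ts T"
    and "tx \<le> ty" and "ts \<le> tx"
  defines "O' \<equiv> {c \<in> occurrences T v. t_start c \<ge> tx \<and> t_end c \<le> ty}"
  shows "(\<forall>vmin \<in> O'. (\<forall>c \<in> O'. t_end vmin - t_start vmin \<le> t_end c - t_start c) \<longrightarrow>
            temporal_path E s v vmin \<and> tx \<le> t_start vmin \<and> t_end vmin \<le> ty \<and>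
            (\<forall>P'. temporal_path E s v P' \<and> tx \<le> t_start P' \<and> t_end P' \<le> ty \<longrightarrow>
                  t_end vmin - t_start vmin \<le> t_end P' - t_start P'))
       \<and> (O' = {} \<longrightarrow> \<not> (\<exists>P'. temporal_path E s v P' \<and> tx \<le> t_start P' \<and> t_end P' \<le> ty))"
proof -
  have dominated: "\<exists>d\<in>O'. t_start P \<le> t_start d \<and> t_end d \<le> t_end P"
    if "temporal_path E s v P" "tx \<le> t_start P" "t_end P \<le> ty" for P
  proof -
    have "occurs_within T v (t_start P) (t_end P)"
      using closed_tree_dominates_path[OF dfs_tree_closed(2,3)[OF assms(5)] that(1)]
        that(2) assms(4,7) by fastforce
    with that(2,3) show ?thesis
      by (force simp: occurs_within_def O'_def)
  qed
  have "temporal_path E s v d" if "d \<in> O'" for d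
    using dfs_tree_closed(1)[OF assms(5)] that by (auto simp: tree_wf_def O'_def occurrences_def)
  then show ?thesis
    using dominated by (fastforce simp: O'_def)
qed

end
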